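(* Let $X$ be a random lifetime. (i) For all $t\in\mathcal S$, $$\overline H^w(t)\le \mu(t)\log\frac{t^2}{2\mu(t)}.$$ (ii) If the reversed hazard rate $\tau(t)$ is decreasing in $t\in\mathcal S$, then for all $t\in\mathcal S$, $$\overline H^w(t)\le \int_0^t x\,\tau(x)\,dx-\mu(t)\,\big[1+\log\tau(t)\big].$$
   Context: $X$ is an absolutely continuous non-negative random variable with density $f$, support $\mathcal S=(0,\nu)$, $\nu\le+\infty$, distribution function $F$ and reversed hazard rate $\tau(t)=f(t)/F(t)$; "decreasing" means non-increasing; $\log$ is the natural logarithm. Weighted past entropy: $\overline H^w(t)=-\int_0^{t}x\,\frac{f(x)}{F(t)}\log\frac{f(x)}{F(t)}\,dx$. Mean past lifetime: $\mu(t)=\mathrm{E}(X\mid X\le t)=\int_0^t x\frac{f(x)}{F(t)}\,dx$. *)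

theory Defs
  imports "HOL-Analysis.Analysis"
begin

text \<open>Lifetime with density f; support (0,nu) with nu an extended real (possibly infinity).\<close>

definition in_supp :: "ereal \<Rightarrow> real \<Rightarrow> bool" where
  "in_supp \<nu> x \<longleftrightarrow> 0 < x \<and> ereal x < \<nu>"

text \<open>Distribution function F(t) = integral of f over (0,t] (f vanishes off (0,nu)).\<close>
definition cdf :: "(real \<Rightarrow> real) \<Rightarrow> real \<Rightarrow> real" where
  "cdf f t = (LINT x:{0<..t}|lborel. f x)"

definition rhr :: "(real \<Rightarrow> real) \<Rightarrow> real \<Rightarrow> real" where
  "rhr f t = f t / cdf f t"

definition wpast_entropy :: "(real \<Rightarrow> real) \<Rightarrow> real \<Rightarrow> real" where
  "wpast_entropy f t =
     - (LINT x:{0<..<t}|lborel. x * (f x / cdf f t) * ln (f x / cdf f t))"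

definition mean_past :: "(real \<Rightarrow> real) \<Rightarrow> real \<Rightarrow> real" where
  "mean_past f t = (LINT x:{0<..<t}|lborel. x * (f x / cdf f t))"

end

theory Submission
  imports Defs
begin

text \<open>Both bounds are instances of Gibbs' inequality \<open>-p ln p \<le> q - p (1 + ln q)\<close> for \<open>p, q > 0\<close>
  (which is \<open>ln y \<le> y - 1\<close> at \<open>y = q / p\<close>), applied to the conditional density \<open>p = f / F(t)\<close>
  and integrated against the weight \<open>x\<close> over \<open>(0, t)\<close>.  For (i) the comparison function is the
  constant \<open>q = 2\<mu>(t) / t\<^sup>2\<close>, chosen so that \<open>\<integral>\<^sub>0\<^sup>t x q dx = \<mu>(t)\<close>; for (ii) it is \<open>q = \<tau>\<close>, and
  monotonicity gives \<open>ln \<tau>(x) \<ge> ln \<tau>(t)\<close> on \<open>(0, t)\<close>, so \<open>ln q\<close> may be replaced by the constant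
  \<open>ln \<tau>(t)\<close>.\<close>

lemma set_integral_pos:
  fixes h :: "'a \<Rightarrow> real"
  assumes int: "set_integrable M A h" and A: "A \<in> sets M"
    and A_not_null: "emeasure M A \<noteq> 0" and pos: "\<And>x. x \<in> A \<Longrightarrow> 0 < h x"
  shows "0 < (LINT x:A|M. h x)"
proof -
  have integrable: "integrable M (\<lambda>x. indicator A x * h x)"
    using int by (simp add: set_integrable_def)
  have nonneg: "AE x in M. 0 \<le> indicator A x * h x"
    using pos by (auto split: split_indicator intro: less_imp_le)
  have "(LINT x:A|M. h x) \<noteq> 0"
  proof
    assume "(LINT x:A|M. h x) = 0"
    then have "AE x in M. indicator A x * h x = 0"
      using integral_nonneg_eq_0_iff_AE[OF integrable nonneg]
      by (simp add: set_lebesgue_integral_def)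
    then have "AE x in M. x \<notin> A"
      by eventually_elim (use pos in \<open>auto split: split_indicator\<close>, fastforce)
    then have "A \<in> null_sets M"
      using A by (subst AE_iff_null_sets) auto
    then show False
      using A_not_null by auto
  qed
  moreover have "0 \<le> (LINT x:A|M. h x)"
    using integral_nonneg_AE[OF nonneg] by (simp add: set_lebesgue_integral_def)
  ultimately show ?thesis
    by linarith
qed

lemma neg_mult_ln_le:
  fixes p q c :: real
  assumes p: "0 < p" and c: "0 < c" and c_le: "c \<le> q"
  shows "- (p * ln p) \<le> q - p * (1 + ln c)"
proof -
  have q: "0 < q"
    using c c_le by linarith
  have "ln (q / p) \<le> q / p - 1"
    using p q by (intro ln_le_minus_one) simp
  then have "p * (ln q - ln p) \<le> q - p"
    using p q mult_left_mono[of "ln (q / p)" "q / p - 1" p] by (simp add: ln_div field_simps)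
  moreover have "ln c \<le> ln q"
    using c c_le by simp
  then have "p * ln c \<le> p * ln q"
    using p by (simp add: mult_left_mono)
  ultimately show ?thesis
    by (simp add: algebra_simps)
qed

lemma set_integral_neg_mult_ln_le:
  fixes w p q :: "'a \<Rightarrow> real" and c :: real
  assumes int_entropy: "set_integrable M A (\<lambda>x. w x * p x * ln (p x))"
    and int_p: "set_integrable M A (\<lambda>x. w x * p x)"
    and int_q: "set_integrable M A (\<lambda>x. w x * q x)"
    and w: "\<And>x. x \<in> A \<Longrightarrow> 0 \<le> w x" and p: "\<And>x. x \<in> A \<Longrightarrow> 0 < p x"
    and c: "0 < c" and c_le: "\<And>x. x \<in> A \<Longrightarrow> c \<le> q x"
  shows "- (LINT x:A|M. w x * p x * ln (p x))
           \<le> (LINT x:A|M. w x * q x) - (LINT x:A|M. w x * p x) * (1 + ln c)"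
proof -
  have "- (LINT x:A|M. w x * p x * ln (p x)) = (LINT x:A|M. - (w x * p x * ln (p x)))"
    using int_entropy by (simp add: set_integral_uminus)
  also have "\<dots> \<le> (LINT x:A|M. w x * q x - w x * p x * (1 + ln c))"
  proof (rule set_integral_mono)
    fix x assume x: "x \<in> A"
    have "w x * - (p x * ln (p x)) \<le> w x * (q x - p x * (1 + ln c))"
      using neg_mult_ln_le[OF p[OF x] c c_le[OF x]] w[OF x] by (rule mult_left_mono)
    then show "- (w x * p x * ln (p x)) \<le> w x * q x - w x * p x * (1 + ln c)"
      by (simp add: algebra_simps)
  qed (use set_integrable_mult_right[of "-1", OF int_entropy] int_p int_q in auto)
  also have "\<dots> = (LINT x:A|M. w x * q x) - (LINT x:A|M. w x * p x) * (1 + ln c)"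
    using int_p int_q by simp
  finally show ?thesis .
qed

lemma in_supp_downward_closed:
  assumes "in_supp \<nu> t" and "0 < x" and "x \<le> t"
  shows "in_supp \<nu> x"
  using assms unfolding in_supp_def by (meson ereal_less_eq(3) order.strict_trans1)

lemma cdf_pos:
  assumes f_int: "integrable lborel f" and f_pos: "\<And>x. in_supp \<nu> x \<Longrightarrow> 0 < f x"
    and t: "in_supp \<nu> t"
  shows "0 < cdf f t"
  unfolding cdf_def
proof (rule set_integral_pos)
  show "set_integrable lborel {0<..t} f"
    unfolding set_integrable_def by (rule integrable_mult_indicator) (simp_all add: f_int)
  show "emeasure lborel {0<..t} \<noteq> 0"
    using t by (simp add: in_supp_def)
qed (auto intro: f_pos in_supp_downward_closed[OF t])

lemma rhr_pos:
  assumes "integrable lborel f" and "\<And>x. in_supp \<nu> x \<Longrightarrow> 0 < f x" and "in_supp \<nu> t"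
  shows "0 < rhr f t"
  using assms cdf_pos[OF assms] by (simp add: rhr_def)

lemma set_integrable_Ioo_mult_density:
  fixes f :: "real \<Rightarrow> real"
  assumes f_int: "integrable lborel f"
  shows "set_integrable lborel {0<..<t} (\<lambda>x. x * (f x / c))"
proof (rule set_integrable_bound)
  show "set_integrable lborel {0<..<t} (\<lambda>x. t / c * f x)"
    unfolding set_integrable_def using f_int by (intro integrable_mult_indicator) auto
  show "set_borel_measurable lborel {0<..<t} (\<lambda>x. x * (f x / c))"
    using borel_measurable_integrable[OF f_int]
    unfolding set_borel_measurable_def by measurable
  show "AE x in lborel. x \<in> {0<..<t} \<longrightarrow> norm (x * (f x / c)) \<le> norm (t / c * f x)"
    by (intro always_eventually)
       (auto simp: abs_mult field_simps intro!: mult_right_mono divide_right_mono)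
qed

lemma mean_past_pos:
  assumes f_int: "integrable lborel f" and f_pos: "\<And>x. in_supp \<nu> x \<Longrightarrow> 0 < f x"
    and t: "in_supp \<nu> t"
  shows "0 < mean_past f t"
  unfolding mean_past_def
proof (rule set_integral_pos[OF set_integrable_Ioo_mult_density[OF f_int]])
  show "emeasure lborel {0<..<t} \<noteq> 0"
    using t by (simp add: in_supp_def)
  show "0 < x * (f x / cdf f t)" if "x \<in> {0<..<t}" for x
    using that cdf_pos[OF f_int f_pos t] f_pos[OF in_supp_downward_closed[OF t]] by simp
qed simp

lemma
  fixes t :: real
  assumes "0 \<le> t"
  shows set_integrable_ident_Ioo: "set_integrable lborel {0<..<t} (\<lambda>x. x)"
    and set_integral_ident_Ioo: "(LINT x:{0<..<t}|lborel. x) = t\<^sup>2 / 2"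
proof -
  have "set_integrable lborel {0..t} (\<lambda>x::real. x)"
    by (rule borel_integrable_atLeastAtMost') (intro continuous_intros)
  then show "set_integrable lborel {0<..<t} (\<lambda>x. x)"
    by (rule set_integrable_subset) auto
  have "(LBINT x=ereal 0..ereal t. x) = t\<^sup>2 / 2 - 0\<^sup>2 / 2"
    using assms
    by (intro interval_integral_FTC_finite)
       (auto intro!: continuous_intros derivative_eq_intros simp: power2_eq_square)
  then show "(LINT x:{0<..<t}|lborel. x) = t\<^sup>2 / 2"
    using assms by (simp add: interval_lebesgue_integral_def)
qed

lemma wpast_entropy_le_mean_past_ln:
  assumes f_int: "integrable lborel f" and f_pos: "\<And>x. in_supp \<nu> x \<Longrightarrow> 0 < f x"
    and t: "in_supp \<nu> t"
    and int_entropy: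
      "set_integrable lborel {0<..<t} (\<lambda>x. x * (f x / cdf f t) * ln (f x / cdf f t))"
  shows "wpast_entropy f t \<le> mean_past f t * ln (t\<^sup>2 / (2 * mean_past f t))"
proof -
  define \<mu> where "\<mu> = mean_past f t"
  define c where "c = 2 * \<mu> / t\<^sup>2"
  have t_pos: "0 < t" and \<mu>_pos: "0 < \<mu>"
    using t mean_past_pos[OF f_int f_pos t] by (simp_all add: in_supp_def \<mu>_def)
  have c_pos: "0 < c"
    using t_pos \<mu>_pos by (simp add: c_def)
  have "wpast_entropy f t \<le> (LINT x:{0<..<t}|lborel. x * c) - \<mu> * (1 + ln c)"
    unfolding wpast_entropy_def \<mu>_def mean_past_def
  proof (rule set_integral_neg_mult_ln_le[OF int_entropy _ _ _ _ c_pos])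
    show "0 < f x / cdf f t" if "x \<in> {0<..<t}" for x
      using that cdf_pos[OF f_int f_pos t] f_pos[OF in_supp_downward_closed[OF t]] by simp
  qed (use set_integrable_Ioo_mult_density[OF f_int] set_integrable_ident_Ioo t_pos in auto)
  also have "(LINT x:{0<..<t}|lborel. x * c) = \<mu>"
    using t_pos by (simp add: set_integral_ident_Ioo c_def)
  also have "\<mu> - \<mu> * (1 + ln c) = \<mu> * ln (t\<^sup>2 / (2 * \<mu>))"
    using t_pos \<mu>_pos by (simp add: c_def ln_div algebra_simps)
  finally show ?thesis
    by (simp add: \<mu>_def)
qed

lemma wpast_entropy_le_rhr:
  assumes f_int: "integrable lborel f" and f_pos: "\<And>x. in_supp \<nu> x \<Longrightarrow> 0 < f x"
    and t: "in_supp \<nu> t"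
    and rhr_antimono: "\<And>s. in_supp \<nu> s \<Longrightarrow> s \<le> t \<Longrightarrow> rhr f t \<le> rhr f s"
    and int_entropy:
      "set_integrable lborel {0<..<t} (\<lambda>x. x * (f x / cdf f t) * ln (f x / cdf f t))"
    and int_rhr: "set_integrable lborel {0<..<t} (\<lambda>x. x * rhr f x)"
  shows "wpast_entropy f t
           \<le> (LINT x:{0<..<t}|lborel. x * rhr f x) - mean_past f t * (1 + ln (rhr f t))"
  unfolding wpast_entropy_def mean_past_def
proof (rule set_integral_neg_mult_ln_le[OF int_entropy _ int_rhr _ _ rhr_pos[OF f_int f_pos t]])
  fix x :: real assume x: "x \<in> {0<..<t}"
  then have "in_supp \<nu> x"
    by (auto intro: in_supp_downward_closed[OF t])
  then show "0 < f x / cdf f t"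
    using cdf_pos[OF f_int f_pos t] f_pos by simp
  show "rhr f t \<le> rhr f x"
    using x \<open>in_supp \<nu> x\<close> by (auto intro: rhr_antimono)
qed (use set_integrable_Ioo_mult_density[OF f_int] in auto)

theorem theorem3p4:
  fixes f :: "real \<Rightarrow> real" and \<nu> :: ereal
  assumes nu_pos: "0 < \<nu>"
    and f_meas: "f \<in> borel_measurable borel"
    and f_nonneg: "\<And>x. 0 \<le> f x"
    and f_pos: "\<And>x. in_supp \<nu> x \<Longrightarrow> 0 < f x"
    and f_zero: "\<And>x. \<not> in_supp \<nu> x \<Longrightarrow> f x = 0"
    and f_int: "integrable lborel f"
    and f_total: "integral\<^sup>L lborel f = 1"
  shows
    "(\<forall>t. in_supp \<nu> t \<and>
          set_integrable lborel {0<..<t} (\<lambda>x. x * (f x / cdf f t) * ln (f x / cdf f t))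
        \<longrightarrow> wpast_entropy f t \<le> mean_past f t * ln (t\<^sup>2 / (2 * mean_past f t)))
     \<and>
     ((\<forall>s t. in_supp \<nu> s \<and> in_supp \<nu> t \<and> s \<le> t \<longrightarrow> rhr f t \<le> rhr f s) \<longrightarrow>
      (\<forall>t. in_supp \<nu> t \<and>
          set_integrable lborel {0<..<t} (\<lambda>x. x * (f x / cdf f t) * ln (f x / cdf f t)) \<and>
          set_integrable lborel {0<..<t} (\<lambda>x. x * rhr f x)
        \<longrightarrow> wpast_entropy f t \<le>
              (LINT x:{0<..<t}|lborel. x * rhr f x) - mean_past f t * (1 + ln (rhr f t))))"
  using wpast_entropy_le_mean_past_ln[OF f_int f_pos]
    wpast_entropy_le_rhr[OF f_int f_pos]
  by blast

end
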